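(* For each integer $k\ge2$ there exists a constant $C_k>0$ such that the following holds. Let $(b_j)_{j\ge1}$ be any increasing sequence of positive numbers with $\sum_{j\ge1}1/b_j<+\infty$, let $f(z)=\prod_{j=1}^\infty(1+z/b_j)$, and let $F(s)=\ln f(e^s)=\sum_{j=1}^\infty\ln(1+e^s/b_j)$, $s\in\mathbb{R}$. Then $$|F^{(k)}(s)|\le C_k\,F''(s)\quad\text{for every } s\in\mathbb{R}.$$
   Context: $F^{(k)}$ denotes the $k$-th derivative of the real function $F$. *)

theory Defs
  imports "HOL-Analysis.Analysis"
begin

text \<open>F(s) = ln f(e^s) = sum over j of ln(1 + e^s / b_j), the sequence b indexed from 0.\<close>
definition logF :: "(nat \<Rightarrow> real) \<Rightarrow> real \<Rightarrow> real" where
  "logF b s = (\<Sum>j. ln (1 + exp s / b j))"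

end

theory Submission
  imports Defs "HOL-Computational_Algebra.Polynomial"
begin

text \<open>
  With the softplus function h(t) = ln (1 + e^t) and a_j = ln b_j we have
  F(s) = \<Sum>_j h(s - a_j). Every derivative of h is O(e^t), and \<Sum>_j e^(-a_j) = \<Sum>_j 1/b_j
  converges, so the series can be differentiated termwise: F^(k)(s) = \<Sum>_j h^(k)(s - a_j).
  The logistic function \<sigma> = h' satisfies \<sigma>' = \<sigma>(1 - \<sigma>), hence h^(k) = P_k(\<sigma>) for the
  polynomials P_1 = x, P_(k+1) = P_k' x(1 - x). For k \<ge> 2 this gives h^(k) = Q(\<sigma>) h'' with a
  polynomial Q, which is bounded on [0, 1] since 0 < \<sigma> < 1. So |h^(k)| \<le> C_k h'' pointwise,
  and summing over the translates gives |F^(k)| \<le> C_k F''.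
\<close>

definition logistic :: "real \<Rightarrow> real" where
  "logistic t = exp t / (1 + exp t)"

lemma logistic_pos: "0 < logistic t"
  unfolding logistic_def by (simp add: add_pos_pos)

lemma logistic_less_one: "logistic t < 1"
  unfolding logistic_def by (simp add: add_pos_pos)

lemma logistic_le_exp: "logistic t \<le> exp t"
  unfolding logistic_def by (simp add: divide_le_eq add_pos_pos)

lemma has_real_derivative_logistic:
  "(logistic has_real_derivative logistic t * (1 - logistic t)) (at t)"
proof -
  have nz: "1 + exp t \<noteq> 0"
    using exp_gt_zero[of t] by linarith
  have "((\<lambda>t. exp t / (1 + exp t)) has_real_derivative
      (exp t * (1 + exp t) - exp t * exp t) / ((1 + exp t) * (1 + exp t))) (at t)"
    using nz by (auto intro!: derivative_eq_intros)
  also have "(exp t * (1 + exp t) - exp t * exp t) / ((1 + exp t) * (1 + exp t))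
      = logistic t * (1 - logistic t)"
    unfolding logistic_def using nz by (simp add: field_simps)
  finally show ?thesis
    unfolding logistic_def[abs_def] .
qed

text \<open>\<open>softplus_deriv m\<close> is the m-th derivative of t \<mapsto> ln (1 + e^t); the polynomial
  \<open>softplus_deriv_poly m\<close> expresses the (m+1)-st one through the logistic function.\<close>

fun softplus_deriv_poly :: "nat \<Rightarrow> real poly" where
  "softplus_deriv_poly 0 = [:0, 1:]"
| "softplus_deriv_poly (Suc m) = pderiv (softplus_deriv_poly m) * [:0, 1, -1:]"

fun softplus_deriv :: "nat \<Rightarrow> real \<Rightarrow> real" where
  "softplus_deriv 0 t = ln (1 + exp t)"
| "softplus_deriv (Suc m) t = poly (softplus_deriv_poly m) (logistic t)"

lemma softplus_deriv_has_real_derivative: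
  "(softplus_deriv m has_real_derivative softplus_deriv (Suc m) t) (at t)"
proof (cases m)
  case 0
  have "((\<lambda>t. ln (1 + exp t)) has_real_derivative exp t / (1 + exp t)) (at t)"
    by (auto intro!: derivative_eq_intros simp: add_pos_pos)
  then show ?thesis
    using 0 by (simp add: logistic_def softplus_deriv.simps(1)[abs_def])
next
  case (Suc j)
  have "((\<lambda>t. poly (softplus_deriv_poly j) (logistic t)) has_real_derivative
      poly (pderiv (softplus_deriv_poly j)) (logistic t) * (logistic t * (1 - logistic t))) (at t)"
    by (rule DERIV_chain2[OF poly_DERIV has_real_derivative_logistic])
  then show ?thesis
    using Suc by (simp add: softplus_deriv.simps(2)[abs_def] algebra_simps)
qed

lemma softplus_deriv_2: "softplus_deriv 2 t = logistic t * (1 - logistic t)"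
  by (simp add: numeral_2_eq_2 algebra_simps pderiv_pCons)

lemma softplus_deriv_2_nonneg: "0 \<le> softplus_deriv 2 t"
  unfolding softplus_deriv_2 using logistic_pos[of t] logistic_less_one[of t] by simp

lemma softplus_deriv_2_le_exp: "softplus_deriv 2 t \<le> exp t"
proof -
  have "logistic t * (1 - logistic t) \<le> logistic t"
    using logistic_pos[of t] logistic_less_one[of t] by (simp add: mult_left_le)
  then show ?thesis
    unfolding softplus_deriv_2 using logistic_le_exp[of t] by linarith
qed

lemma softplus_deriv_Suc_Suc:
  "softplus_deriv (Suc (Suc m)) t =
     poly (pderiv (softplus_deriv_poly m)) (logistic t) * softplus_deriv 2 t"
  unfolding softplus_deriv_2 by (simp add: algebra_simps)

lemma poly_bounded_on_compact:
  fixes p :: "'a::real_normed_field poly"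
  assumes "compact S"
  shows "\<exists>B>0. \<forall>x\<in>S. norm (poly p x) \<le> B"
proof -
  have "compact (poly p ` S)"
    using assms by (intro compact_continuous_image continuous_intros)
  then show ?thesis
    using compact_imp_bounded bounded_pos by (metis image_eqI)
qed

lemma softplus_deriv_le_second:
  assumes "2 \<le> m"
  shows "\<exists>C>0. \<forall>t. \<bar>softplus_deriv m t\<bar> \<le> C * softplus_deriv 2 t"
proof -
  obtain j where m: "m = Suc (Suc j)"
    using assms by (metis add_2_eq_Suc le_Suc_ex)
  obtain C where "C > 0" and C: "\<forall>x\<in>{0..1}. \<bar>poly (pderiv (softplus_deriv_poly j)) x\<bar> \<le> C"
    using poly_bounded_on_compact[of "{0..1::real}"] by auto
  have "\<bar>softplus_deriv m t\<bar> \<le> C * softplus_deriv 2 t" for t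
  proof -
    have "logistic t \<in> {0..1}"
      using logistic_pos[of t] logistic_less_one[of t] by simp
    then show ?thesis
      unfolding m softplus_deriv_Suc_Suc abs_mult
      using C softplus_deriv_2_nonneg[of t] by (simp add: mult_right_mono)
  qed
  with \<open>C > 0\<close> show ?thesis by blast
qed

lemma softplus_deriv_le_exp: "\<exists>K. \<forall>t. \<bar>softplus_deriv m t\<bar> \<le> K * exp t"
proof -
  consider "m = 0" | "m = 1" | "2 \<le> m" by linarith
  then show ?thesis
  proof cases
    case 1
    have "\<bar>ln (1 + exp t)\<bar> \<le> exp t" for t :: real
      using ln_add_one_self_le_self[of "exp t"] by simp
    with 1 show ?thesis by (intro exI[of _ 1]) simp
  next
    case 2
    have "\<bar>logistic t\<bar> \<le> exp t" for t :: real
      using logistic_pos[of t] logistic_le_exp[of t] by simp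
    with 2 show ?thesis by (intro exI[of _ 1]) simp
  next
    case 3
    then obtain C where "C > 0" and C: "\<forall>t. \<bar>softplus_deriv m t\<bar> \<le> C * softplus_deriv 2 t"
      using softplus_deriv_le_second by blast
    have "\<bar>softplus_deriv m t\<bar> \<le> C * exp t" for t
      using C softplus_deriv_2_le_exp[of t] \<open>C > 0\<close>
      by (meson mult_left_mono less_imp_le order_trans)
    then show ?thesis by blast
  qed
qed

definition translate_sum :: "(real \<Rightarrow> real) \<Rightarrow> (nat \<Rightarrow> real) \<Rightarrow> real \<Rightarrow> real" where
  "translate_sum g a s = (\<Sum>j. g (s - a j))"

lemma exp_bounded_translate_le:
  fixes g :: "real \<Rightarrow> real"
  assumes "\<And>t. \<bar>g t\<bar> \<le> K * exp t" and "s \<le> r"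
  shows "\<bar>g (s - a j)\<bar> \<le> K * exp r * exp (- a j)"
proof -
  have "0 \<le> K"
    using assms(1)[of 0] abs_ge_zero[of "g 0"] by simp
  have "\<bar>g (s - a j)\<bar> \<le> K * (exp s * exp (- a j))"
    using assms(1)[of "s - a j"] by (simp add: exp_diff exp_minus field_simps)
  also have "\<dots> \<le> K * (exp r * exp (- a j))"
    using \<open>0 \<le> K\<close> \<open>s \<le> r\<close> by (intro mult_left_mono mult_right_mono) auto
  finally show ?thesis
    by (simp only: mult.assoc)
qed

lemma summable_abs_translates:
  fixes g :: "real \<Rightarrow> real"
  assumes "\<And>t. \<bar>g t\<bar> \<le> K * exp t" and "summable (\<lambda>j. exp (- a j))"
  shows "summable (\<lambda>j. \<bar>g (s - a j)\<bar>)"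
proof (rule summable_comparison_test)
  show "\<exists>N. \<forall>j\<ge>N. norm \<bar>g (s - a j)\<bar> \<le> K * exp s * exp (- a j)"
    using exp_bounded_translate_le[OF assms(1) order_refl, of s a] by auto
  show "summable (\<lambda>j. K * exp s * exp (- a j))"
    using assms(2) by (rule summable_mult)
qed

lemma summable_translates:
  fixes g :: "real \<Rightarrow> real"
  assumes "\<And>t. \<bar>g t\<bar> \<le> K * exp t" and "summable (\<lambda>j. exp (- a j))"
  shows "summable (\<lambda>j. g (s - a j))"
  using summable_abs_translates[OF assms] by (rule summable_rabs_cancel)

lemma has_real_derivative_translate_sum:
  fixes g :: "real \<Rightarrow> real"
  assumes g': "\<And>t. (g has_real_derivative g' t) (at t)"
    and "\<And>t. \<bar>g t\<bar> \<le> K * exp t" and "\<And>t. \<bar>g' t\<bar> \<le> K' * exp t"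
    and summ: "summable (\<lambda>j. exp (- a j))"
  shows "(translate_sum g a has_real_derivative translate_sum g' a s) (at s)"
proof -
  let ?S = "{..<s + 1}"
  have "uniform_limit ?S (\<lambda>n x. \<Sum>j<n. g' (x - a j)) (\<lambda>x. \<Sum>j. g' (x - a j)) sequentially"
  proof (rule Weierstrass_m_test)
    fix j x
    assume "x \<in> ?S"
    then show "norm (g' (x - a j)) \<le> K' * exp (s + 1) * exp (- a j)"
      using exp_bounded_translate_le[OF assms(3), of x "s + 1" a j] by simp
  next
    show "summable (\<lambda>j. K' * exp (s + 1) * exp (- a j))"
      using summ by (rule summable_mult)
  qed
  moreover have "((\<lambda>x. g (x - a j)) has_real_derivative g' (x - a j)) (at x within ?S)" for j x
  proof -
    have "((\<lambda>x. x - a j) has_real_derivative 1) (at x)"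
      by (auto intro!: derivative_eq_intros)
    from DERIV_chain2[OF g' this] show ?thesis
      by (simp add: has_field_derivative_at_within)
  qed
  ultimately have "\<exists>G. \<forall>x\<in>?S. (\<lambda>j. g (x - a j)) sums G x \<and>
      (G has_field_derivative (\<Sum>j. g' (x - a j))) (at x within ?S)"
    using summable_translates[OF assms(2) summ, of s]
    by (intro has_field_derivative_series[of ?S _ _ _ s]) auto
  then obtain G where G: "\<And>x. x \<in> ?S \<Longrightarrow> (\<lambda>j. g (x - a j)) sums G x \<and>
      (G has_real_derivative (\<Sum>j. g' (x - a j))) (at x within ?S)"
    by blast
  have dG: "(G has_real_derivative translate_sum g' a s) (at s)"
    using G[of s] at_within_open[of s ?S] unfolding translate_sum_def by simp
  have eqG: "G x = translate_sum g a x" if "x \<in> ?S" for x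
    using G[OF that] unfolding translate_sum_def by (simp add: sums_iff)
  show ?thesis
    by (rule has_field_derivative_transform_within_open[OF dG open_lessThan _ eqG]) simp_all
qed

lemma higher_deriv_translate_sum:
  assumes "\<And>m t. (g m has_real_derivative g (Suc m) t) (at t)"
    and "\<And>m. \<exists>K. \<forall>t. \<bar>g m t\<bar> \<le> K * exp t"
    and "summable (\<lambda>j. exp (- a j))"
  shows "(deriv ^^ m) (translate_sum (g 0) a) = translate_sum (g m) a"
proof (induction m)
  case (Suc m)
  obtain K K' where "\<And>t. \<bar>g m t\<bar> \<le> K * exp t" and "\<And>t. \<bar>g (Suc m) t\<bar> \<le> K' * exp t"
    using assms(2) by metis
  then have "deriv (translate_sum (g m) a) s = translate_sum (g (Suc m)) a s" for s
    using has_real_derivative_translate_sum[OF assms(1)] assms(3) by (blast intro: DERIV_imp_deriv)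
  with Suc show ?case by auto
qed simp

lemma translate_sum_abs_le:
  fixes g :: "real \<Rightarrow> real"
  assumes "\<And>t. \<bar>g t\<bar> \<le> C * h t"
    and "\<And>t. \<bar>g t\<bar> \<le> K * exp t" and "\<And>t. \<bar>h t\<bar> \<le> K' * exp t"
    and summ: "summable (\<lambda>j. exp (- a j))"
  shows "\<bar>translate_sum g a s\<bar> \<le> C * translate_sum h a s"
proof -
  have "\<bar>translate_sum g a s\<bar> \<le> (\<Sum>j. \<bar>g (s - a j)\<bar>)"
    unfolding translate_sum_def
    by (rule summable_rabs[OF summable_abs_translates[OF assms(2) summ]])
  also have "\<dots> \<le> (\<Sum>j. C * h (s - a j))"
    using assms(1) summable_abs_translates[OF assms(2) summ]
      summable_mult[OF summable_translates[OF assms(3) summ]]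
    by (rule suminf_le)
  also have "\<dots> = C * translate_sum h a s"
    unfolding translate_sum_def by (rule suminf_mult[OF summable_translates[OF assms(3) summ]])
  finally show ?thesis .
qed

theorem lemma4p5:
  fixes k :: nat
  assumes "k \<ge> 2"
  shows "\<exists>C>0. \<forall>b :: nat \<Rightarrow> real.
           (\<forall>j. b j > 0) \<longrightarrow> mono b \<longrightarrow> summable (\<lambda>j. 1 / b j) \<longrightarrow>
           (\<forall>s::real. \<bar>(deriv ^^ k) (logF b) s\<bar> \<le> C * (deriv ^^ 2) (logF b) s)"
proof -
  obtain C where "C > 0" and C: "\<And>t. \<bar>softplus_deriv k t\<bar> \<le> C * softplus_deriv 2 t"
    using softplus_deriv_le_second[OF assms] by blast
  have "\<bar>(deriv ^^ k) (logF b) s\<bar> \<le> C * (deriv ^^ 2) (logF b) s"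
    if pos: "\<forall>j. b j > 0" and "summable (\<lambda>j. 1 / b j)" for b :: "nat \<Rightarrow> real" and s
  proof -
    define a where "a j = ln (b j)" for j
    have summ: "summable (\<lambda>j. exp (- a j))"
      using that by (simp add: a_def exp_minus inverse_eq_divide)
    have "logF b = translate_sum (softplus_deriv 0) a"
      using pos by (simp add: fun_eq_iff logF_def translate_sum_def a_def exp_diff)
    then have "(deriv ^^ m) (logF b) = translate_sum (softplus_deriv m) a" for m
      using higher_deriv_translate_sum[where g = softplus_deriv,
          OF softplus_deriv_has_real_derivative softplus_deriv_le_exp summ]
      by simp
    moreover obtain K K' where "\<And>t. \<bar>softplus_deriv k t\<bar> \<le> K * exp t"
        and "\<And>t. \<bar>softplus_deriv 2 t\<bar> \<le> K' * exp t"
      using softplus_deriv_le_exp by metis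
    then have "\<bar>translate_sum (softplus_deriv k) a s\<bar> \<le> C * translate_sum (softplus_deriv 2) a s"
      using C summ by (intro translate_sum_abs_le)
    ultimately show ?thesis
      by simp
  qed
  with \<open>C > 0\<close> show ?thesis by blast
qed

end
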